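(* Let $\mathcal G$ be a CFG and $0<p<1$ with $\Pr_{term}(\mathcal G)\ge1-p$. Then for every $n\in\mathbb N$, $n\ge1$, there exist the following objects, all definable in the first-order theory of $(\mathbb Q,+,\cdot,<)$: - an inductive invariant $\mathsf{Inv}_n$ containing the initial state $\sigma_{init}$; - a function $\mathsf{SI}_n:\mathsf{Inv}_n\to\mathbb R$ with $\mathsf{SI}_n(\sigma_{init})\le p+\frac1n$, $\mathsf{SI}_n\ge0$, and $\mathsf{SI}_n$ a supermartingale function on $\mathsf{Inv}_n$; - a real $\epsilon_n>0$; - a function $U_n:\mathsf{Inv}_n\to\mathbb N$, bounded above by some $H_n$, with $U_n(\gamma)=0$ for every $\gamma$ that satisfies $\mathsf{SI}_n(\gamma)\ge1$ or $\gamma=\sigma_\bot$. Moreover, for every other state $(l,\mathbf x)\in\mathsf{Inv}_n$: - at assignment or nondeterministic states, $U_n(\sigma')<U_n(l,\mathbf x)$ for every successor $\sigma'$; - at probabilistic states, $\sum\mathsf{Pr}(l,l')[\mathbf x]>\epsilon_n$, where the sum ranges over the successors $(l',\mathbf x')$ with $U_n(l',\mathbf x')<U_n(l,\mathbf x)$.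
   Context: A probabilistic control flow graph (CFG) is a tuple $\mathcal G=(L,V,l_{init},\mathbf x_{init},\mapsto,G,\mathsf{Pr},\mathsf{Upd})$. $L$ is a finite set of locations, partitioned into assignment, nondeterministic and probabilistic locations. The variables range over $\mathbb Q$. The initial state is $\sigma_{init}=(l_{init},\mathbf x_{init})$. There are finitely many guarded transitions. At probabilistic locations, each outgoing transition $(l,l')$ carries a probability expression $\mathsf{Pr}(l,l')$ whose values are positive and sum to $1$ over the enabled transitions. Assignment locations have at most one outgoing transition, carrying an update of one variable by an arithmetic expression. A state is a pair $(l,\mathbf x)$. Every state has at least one, and finitely many, successors. Schedulers map finite paths ending in nondeterministic states to successors and induce probability measures $\mathbb P_{\mathfrak s}$ on runs. The terminal state is $\sigma_\bot=(l_{out},\mathbf 0)$. $\Pr_{term}(\mathcal G)=\inf_{\mathfrak s}\mathbb P_{\mathfrak s}[\text{run visits }\sigma_\bot]$. An inductive invariant is a set of states closed under successors. A function $f:\mathsf{Inv}\to\mathbb R$ is a supermartingale function on $\mathsf{Inv}$ if, at every non-terminal $(l,\mathbf x)\in\mathsf{Inv}$: - at assignment or nondeterministic states, $f(l,\mathbf x)\ge f(\sigma')$ for every successor $\sigma'$; - at probabilistic states, $f(l,\mathbf x)\ge\sum\mathsf{Pr}(l,l')[\mathbf x]f(l',\mathbf x')$, summed over successors. Definability: states are encoded as tuples of rationals, with locations encoded as natural numbers. A set of states, or an $\mathbb N$-valued function, is definable if it, respectively its graph, is defined by a first-order formula over $(\mathbb Q,+,\cdot,<)$. A real-valued function $f$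 is definable if the relation $\{(\sigma,q):q\in\mathbb Q,\ q\le f(\sigma)\}$ is so definable. *)

theory Defs
  imports Complex_Main
begin

(* Variables are indexed 0..nvars-1; a valuation is a rat list of length nvars. *)
datatype aexp = AConst rat | AVar nat | AAdd aexp aexp | AMul aexp aexp | ANeg aexp

fun aeval :: "aexp \<Rightarrow> rat list \<Rightarrow> rat" where
  "aeval (AConst c) x = c"
| "aeval (AVar i) x = x ! i"
| "aeval (AAdd a b) x = aeval a x + aeval b x"
| "aeval (AMul a b) x = aeval a x * aeval b x"
| "aeval (ANeg a) x = - aeval a x"

datatype bexp = BTrue | BLe aexp aexp | BLt aexp aexp | BNot bexp | BAnd bexp bexp | BOr bexp bexp

fun beval :: "bexp \<Rightarrow> rat list \<Rightarrow> bool" where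
  "beval BTrue x = True"
| "beval (BLe a b) x = (aeval a x \<le> aeval b x)"
| "beval (BLt a b) x = (aeval a x < aeval b x)"
| "beval (BNot b) x = (\<not> beval b x)"
| "beval (BAnd b c) x = (beval b x \<and> beval c x)"
| "beval (BOr b c) x = (beval b x \<or> beval c x)"

datatype lkind = Assign | NonDet | Prob

record cfg =
  nlocs :: nat
  nvars :: nat
  kind :: "nat \<Rightarrow> lkind"
  linit :: nat
  xinit :: "rat list"
  lout :: nat
  ctrans :: "(nat \<times> nat) set"
  cguard :: "nat \<times> nat \<Rightarrow> bexp"
  cprob :: "nat \<times> nat \<Rightarrow> aexp"
  cupd :: "nat \<times> nat \<Rightarrow> nat \<times> aexp"   (* variable index, expression *)

type_synonym state = "nat \<times> rat list"

definition valid_state :: "cfg \<Rightarrow> state \<Rightarrow> bool" where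
  "valid_state G \<sigma> \<longleftrightarrow> fst \<sigma> < nlocs G \<and> length (snd \<sigma>) = nvars G"

definition sinit :: "cfg \<Rightarrow> state" where
  "sinit G = (linit G, xinit G)"

definition sbot :: "cfg \<Rightarrow> state" where
  "sbot G = (lout G, replicate (nvars G) 0)"

definition succ :: "cfg \<Rightarrow> state \<Rightarrow> state \<Rightarrow> bool" where
  "succ G \<sigma> \<sigma>' \<longleftrightarrow> valid_state G \<sigma> \<and> (fst \<sigma>, fst \<sigma>') \<in> ctrans G
     \<and> beval (cguard G (fst \<sigma>, fst \<sigma>')) (snd \<sigma>)
     \<and> snd \<sigma>' = (if kind G (fst \<sigma>) = Assign
                  then (case cupd G (fst \<sigma>, fst \<sigma>') of (j, e) \<Rightarrow> (snd \<sigma>)[j := aeval e (snd \<sigma>)])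
                  else snd \<sigma>)"

definition succs :: "cfg \<Rightarrow> state \<Rightarrow> state set" where
  "succs G \<sigma> = {\<sigma>'. succ G \<sigma> \<sigma>'}"

definition trprob :: "cfg \<Rightarrow> state \<Rightarrow> state \<Rightarrow> real" where
  "trprob G \<sigma> \<sigma>' = real_of_rat (aeval (cprob G (fst \<sigma>, fst \<sigma>')) (snd \<sigma>))"

definition enabled :: "cfg \<Rightarrow> nat \<Rightarrow> rat list \<Rightarrow> nat set" where
  "enabled G l x = {l'. (l, l') \<in> ctrans G \<and> beval (cguard G (l, l')) x}"

definition wf_cfg :: "cfg \<Rightarrow> bool" where
  "wf_cfg G \<longleftrightarrow>
     valid_state G (sinit G) \<and> lout G < nlocs G
   \<and> (\<forall>(l, l') \<in> ctrans G. l < nlocs G \<and> l' < nlocs G)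
   \<and> (\<forall>(l, l') \<in> ctrans G. kind G l = Assign \<longrightarrow> fst (cupd G (l, l')) < nvars G)
   \<and> (\<forall>l l1 l2. kind G l = Assign \<and> (l, l1) \<in> ctrans G \<and> (l, l2) \<in> ctrans G \<longrightarrow> l1 = l2)
   \<and> (\<forall>l x. valid_state G (l, x) \<and> kind G l = Prob \<longrightarrow>
         (\<forall>l' \<in> enabled G l x. aeval (cprob G (l, l')) x > 0)
       \<and> (\<Sum>l' \<in> enabled G l x. aeval (cprob G (l, l')) x) = 1)
   \<and> (\<forall>\<sigma>. valid_state G \<sigma> \<longrightarrow> succs G \<sigma> \<noteq> {})"

definition is_sched :: "cfg \<Rightarrow> (state list \<Rightarrow> state) \<Rightarrow> bool" where
  "is_sched G s \<longleftrightarrow> (\<forall>\<pi>. \<pi> \<noteq> [] \<and> valid_state G (last \<pi>) \<and> kind G (fst (last \<pi>)) = NonDet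
                          \<longrightarrow> succ G (last \<pi>) (s \<pi>))"

(* probability, under scheduler s, that the run extending the finite path \<pi>
   visits sbot within n further steps (measure of the corresponding cylinder sets) *)
fun reachp :: "cfg \<Rightarrow> (state list \<Rightarrow> state) \<Rightarrow> nat \<Rightarrow> state list \<Rightarrow> real" where
  "reachp G s 0 \<pi> = (if sbot G \<in> set \<pi> then 1 else 0)"
| "reachp G s (Suc n) \<pi> =
     (if sbot G \<in> set \<pi> then 1 else
      (case kind G (fst (last \<pi>)) of
         NonDet \<Rightarrow> reachp G s n (\<pi> @ [s \<pi>])
       | Assign \<Rightarrow> reachp G s n (\<pi> @ [SOME \<sigma>'. succ G (last \<pi>) \<sigma>'])
       | Prob \<Rightarrow> (\<Sum>\<sigma>' \<in> succs G (last \<pi>). trprob G (last \<pi>) \<sigma>' * reachp G s n (\<pi> @ [\<sigma>']))))"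

(* P_s[run visits sbot] = sup over n of the probability of visiting within n steps *)
definition reach_prob :: "cfg \<Rightarrow> (state list \<Rightarrow> state) \<Rightarrow> real" where
  "reach_prob G s = (SUP n. reachp G s n [sinit G])"

definition Pr_term :: "cfg \<Rightarrow> real" where
  "Pr_term G = (INF s \<in> {s. is_sched G s}. reach_prob G s)"

definition is_inductive_inv :: "cfg \<Rightarrow> state set \<Rightarrow> bool" where
  "is_inductive_inv G Inv \<longleftrightarrow> Inv \<subseteq> {\<sigma>. valid_state G \<sigma>}
     \<and> (\<forall>\<sigma> \<in> Inv. \<forall>\<sigma>'. succ G \<sigma> \<sigma>' \<longrightarrow> \<sigma>' \<in> Inv)"

definition is_supermartingale :: "cfg \<Rightarrow> state set \<Rightarrow> (state \<Rightarrow> real) \<Rightarrow> bool" where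
  "is_supermartingale G Inv f \<longleftrightarrow>
    (\<forall>\<sigma> \<in> Inv. \<sigma> \<noteq> sbot G \<longrightarrow>
       ((kind G (fst \<sigma>) = Assign \<or> kind G (fst \<sigma>) = NonDet) \<longrightarrow> (\<forall>\<sigma>' \<in> succs G \<sigma>. f \<sigma> \<ge> f \<sigma>'))
     \<and> (kind G (fst \<sigma>) = Prob \<longrightarrow> f \<sigma> \<ge> (\<Sum>\<sigma>' \<in> succs G \<sigma>. trprob G \<sigma> \<sigma>' * f \<sigma>')))"

datatype fterm = FVar nat | FAdd fterm fterm | FMul fterm fterm

fun teval :: "(nat \<Rightarrow> rat) \<Rightarrow> fterm \<Rightarrow> rat" where
  "teval e (FVar i) = e i"
| "teval e (FAdd a b) = teval e a + teval e b"
| "teval e (FMul a b) = teval e a * teval e b"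

datatype fform = FEq fterm fterm | FLess fterm fterm | FNot fform | FAnd fform fform | FEx nat fform

fun fholds :: "(nat \<Rightarrow> rat) \<Rightarrow> fform \<Rightarrow> bool" where
  "fholds e (FEq a b) = (teval e a = teval e b)"
| "fholds e (FLess a b) = (teval e a < teval e b)"
| "fholds e (FNot \<phi>) = (\<not> fholds e \<phi>)"
| "fholds e (FAnd \<phi> \<psi>) = (fholds e \<phi> \<and> fholds e \<psi>)"
| "fholds e (FEx i \<phi>) = (\<exists>q. fholds (e(i := q)) \<phi>)"

definition definable_set :: "nat \<Rightarrow> rat list set \<Rightarrow> bool" where
  "definable_set m A \<longleftrightarrow> (\<exists>\<phi>. \<forall>v e. length v = m \<and> (\<forall>i<m. e i = v ! i)
                                    \<longrightarrow> (fholds e \<phi> \<longleftrightarrow> v \<in> A))"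

definition enc :: "state \<Rightarrow> rat list" where
  "enc \<sigma> = of_nat (fst \<sigma>) # snd \<sigma>"

definition definable_states :: "cfg \<Rightarrow> state set \<Rightarrow> bool" where
  "definable_states G A \<longleftrightarrow> definable_set (Suc (nvars G)) (enc ` A)"

definition definable_natfun :: "cfg \<Rightarrow> state set \<Rightarrow> (state \<Rightarrow> nat) \<Rightarrow> bool" where
  "definable_natfun G A U \<longleftrightarrow>
     definable_set (Suc (Suc (nvars G))) {enc \<sigma> @ [of_nat (U \<sigma>)] | \<sigma>. \<sigma> \<in> A}"

definition definable_realfun :: "cfg \<Rightarrow> state set \<Rightarrow> (state \<Rightarrow> real) \<Rightarrow> bool" where
  "definable_realfun G A f \<longleftrightarrow>
     definable_set (Suc (Suc (nvars G))) {enc \<sigma> @ [q] | \<sigma> q. \<sigma> \<in> A \<and> real_of_rat q \<le> f \<sigma>}"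

(* a real constant, viewed as a 0-ary real-valued function *)
definition definable_real :: "real \<Rightarrow> bool" where
  "definable_real r \<longleftrightarrow> definable_set 1 {[q] | q. real_of_rat q \<le> r}"

end

theory Submission
  imports Defs
begin

(* Value iteration computes min_reach G k, the least probability over schedulers of reaching
   the terminal state within k steps; it increases with k, and the scheduler that always moves
   to a successor of least limit value terminates with probability at most the limit. So
   Pr_term G >= 1 - p gives a horizon M with min_reach G M at the initial state above
   1 - p - delta, delta = 1/(4n). Then SI = (1 - min_reach G M) / (1 - delta) is a supermartingale
   (one more step of value iteration can only increase the value), it is at most p + 1/n
   initially, and SI >= 1 exactly where min_reach G M <= delta. The rank of any other state is
   the least j with min_reach G j > j delta / M. If the rank is j + 1, then at an assignment or
   nondeterministic state every successor has min_reach G j > j delta / M, and at a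
   probabilistic state these successors carry probability more than delta / M; either way their
   rank is at most j. All objects are definable because min_reach G k is, at each location, a
   conditional expression over the guards with polynomial leaves, so they are described by
   quantifier-free formulas over the encoded state. *)

lemma Min_image_mono:
  fixes f g :: "'a \<Rightarrow> 'b::linorder"
  assumes "finite S" "S \<noteq> {}" "\<And>s. s \<in> S \<Longrightarrow> f s \<le> g s"
  shows "Min (f ` S) \<le> Min (g ` S)"
  using assms by (auto intro: order_trans[OF Min_le])

lemma tendsto_Min_finite:
  fixes f :: "'a \<Rightarrow> nat \<Rightarrow> real"
  assumes "finite S" "S \<noteq> {}" "\<And>s. s \<in> S \<Longrightarrow> f s \<longlonglongrightarrow> l s"
  shows "(\<lambda>k. Min ((\<lambda>s. f s k) ` S)) \<longlonglongrightarrow> Min (l ` S)"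
  using assms
proof (induction S rule: finite_ne_induct)
  case (insert x F)
  have "(\<lambda>k. min (f x k) (Min ((\<lambda>s. f s k) ` F))) \<longlonglongrightarrow> min (l x) (Min (l ` F))"
    using insert by (intro tendsto_min) auto
  then show ?case using insert by simp
qed simp

lemma Min_insert_guarded:
  fixes c :: "'a::linorder"
  assumes "finite T" "E \<subseteq> T" "E \<noteq> {}" "\<And>l. l \<in> E \<Longrightarrow> f l \<le> c"
  shows "Min (insert c ((\<lambda>l. if l \<in> E then f l else c) ` T)) = Min (f ` E)"
proof -
  have "finite E" using finite_subset[OF assms(2,1)] .
  obtain l where l: "l \<in> E" using assms(3) by blast
  have "Min (f ` E) \<le> c"
    using order_trans[OF Min_le[OF finite_imageI[OF \<open>finite E\<close>] imageI[of l E f, OF l]] assms(4)[OF l]] .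
  moreover have "insert c ((\<lambda>l. if l \<in> E then f l else c) ` T) = insert c (f ` E)"
    using assms(2) by auto
  ultimately show ?thesis using \<open>finite E\<close> assms(3) by (simp add: min_absorb2)
qed

lemma sum_mult_le_mass_above:
  fixes p v :: "'a \<Rightarrow> 'b::linordered_idom"
  assumes "finite A" "\<And>a. a \<in> A \<Longrightarrow> 0 \<le> p a" "sum p A = 1" "\<And>a. a \<in> A \<Longrightarrow> v a \<le> 1" "0 \<le> t"
  shows "(\<Sum>a\<in>A. p a * v a) \<le> (\<Sum>a\<in>{a\<in>A. t < v a}. p a) + t"
proof -
  have "(\<Sum>a\<in>A. p a * v a) \<le> (\<Sum>a\<in>A. if t < v a then p a else p a * t)"
    using assms(2,4) by (intro sum_mono) (auto simp: mult_left_le mult_left_mono)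
  also have "\<dots> = (\<Sum>a\<in>{a\<in>A. t < v a}. p a) + (\<Sum>a\<in>{a\<in>A. \<not> t < v a}. p a * t)"
    using assms(1) by (simp add: sum.If_cases Int_def Collect_conj_eq[symmetric])
  also have "(\<Sum>a\<in>{a\<in>A. \<not> t < v a}. p a * t) \<le> (\<Sum>a\<in>A. p a * t)"
    using assms(1,2,5) by (intro sum_mono2) auto
  also have "(\<Sum>a\<in>A. p a * t) = t" using assms(3) by (simp flip: sum_distrib_right)
  finally show ?thesis by simp
qed

lemma eq_of_nat_Least_iff:
  fixes q :: "'a::semiring_char_0"
  assumes "P M"
  shows "q = of_nat (LEAST j. P j) \<longleftrightarrow> (\<exists>k\<in>{..<Suc M}. q = of_nat k \<and> P k \<and> (\<forall>j\<in>{..<k}. \<not> P j))"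
proof
  assume "q = of_nat (LEAST j. P j)"
  moreover have "(LEAST j. P j) < Suc M" using Least_le[of P M] assms by simp
  ultimately show "\<exists>k\<in>{..<Suc M}. q = of_nat k \<and> P k \<and> (\<forall>j\<in>{..<k}. \<not> P j)"
    using LeastI[of P M] not_less_Least[of _ P] assms by blast
next
  assume "\<exists>k\<in>{..<Suc M}. q = of_nat k \<and> P k \<and> (\<forall>j\<in>{..<k}. \<not> P j)"
  then obtain k where "q = of_nat k" "P k" "\<forall>j<k. \<not> P j" by blast
  moreover have "(LEAST j. P j) = k"
    using calculation(2,3) by (intro Least_equality) (auto simp: not_less[symmetric])
  ultimately show "q = of_nat (LEAST j. P j)" by simp
qed

section \<open>Value iteration for minimal reachability\<close>

definition trprob_rat :: "cfg \<Rightarrow> state \<Rightarrow> state \<Rightarrow> rat" where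
  "trprob_rat G \<sigma> \<sigma>' = aeval (cprob G (fst \<sigma>, fst \<sigma>')) (snd \<sigma>)"

lemma trprob_eq_of_rat: "trprob G \<sigma> \<sigma>' = of_rat (trprob_rat G \<sigma> \<sigma>')"
  by (simp add: trprob_def trprob_rat_def)

definition next_val :: "cfg \<Rightarrow> state \<Rightarrow> nat \<Rightarrow> rat list" where
  "next_val G \<sigma> l' = (if kind G (fst \<sigma>) = Assign
     then (case cupd G (fst \<sigma>, l') of (j, e) \<Rightarrow> (snd \<sigma>)[j := aeval e (snd \<sigma>)]) else snd \<sigma>)"

fun min_reach :: "cfg \<Rightarrow> nat \<Rightarrow> state \<Rightarrow> rat" where
  "min_reach G 0 \<sigma> = (if \<sigma> = sbot G then 1 else 0)"
| "min_reach G (Suc k) \<sigma> = (if \<sigma> = sbot G then 1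
     else if kind G (fst \<sigma>) = Prob then (\<Sum>\<sigma>'\<in>succs G \<sigma>. trprob_rat G \<sigma> \<sigma>' * min_reach G k \<sigma>')
     else Min (min_reach G k ` succs G \<sigma>))"

declare min_reach.simps(2) [simp del]

lemma min_reach_sbot [simp]: "min_reach G k (sbot G) = 1"
  by (cases k) (simp_all add: min_reach.simps)

lemma min_reach_Suc_Prob:
  "\<sigma> \<noteq> sbot G \<Longrightarrow> kind G (fst \<sigma>) = Prob \<Longrightarrow>
    min_reach G (Suc k) \<sigma> = (\<Sum>\<sigma>'\<in>succs G \<sigma>. trprob_rat G \<sigma> \<sigma>' * min_reach G k \<sigma>')"
  by (simp add: min_reach.simps)

lemma min_reach_Suc_not_Prob:
  "\<sigma> \<noteq> sbot G \<Longrightarrow> kind G (fst \<sigma>) \<noteq> Prob \<Longrightarrow>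
    min_reach G (Suc k) \<sigma> = Min (min_reach G k ` succs G \<sigma>)"
  by (simp add: min_reach.simps)

context
  fixes G :: cfg
  assumes wf: "wf_cfg G"
begin

lemma succs_conv_enabled:
  "valid_state G \<sigma> \<Longrightarrow> succs G \<sigma> = (\<lambda>l'. (l', next_val G \<sigma> l')) ` enabled G (fst \<sigma>) (snd \<sigma>)"
  unfolding succs_def succ_def enabled_def next_val_def by (cases \<sigma>) (auto simp: image_iff)

lemma finite_transitions_from: "finite {l'. (l, l') \<in> ctrans G}"
proof (rule finite_subset)
  show "{l'. (l, l') \<in> ctrans G} \<subseteq> {..<nlocs G}" using wf unfolding wf_cfg_def by auto
qed simp

lemma finite_succs: "finite (succs G \<sigma>)"
proof (cases "valid_state G \<sigma>")
  case True
  have "enabled G (fst \<sigma>) (snd \<sigma>) \<subseteq> {l'. (fst \<sigma>, l') \<in> ctrans G}" by (auto simp: enabled_def)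
  then show ?thesis
    using True finite_transitions_from by (simp add: succs_conv_enabled finite_subset)
qed (simp add: succs_def succ_def)

lemma succs_nonempty: "valid_state G \<sigma> \<Longrightarrow> succs G \<sigma> \<noteq> {}"
  using wf unfolding wf_cfg_def by blast

lemma valid_state_succ: "succ G \<sigma> \<sigma>' \<Longrightarrow> valid_state G \<sigma>'"
  using wf unfolding wf_cfg_def
  by (auto simp: succ_def valid_state_def split: prod.splits)

lemma valid_state_if_in_succs: "\<sigma>' \<in> succs G \<sigma> \<Longrightarrow> valid_state G \<sigma>'"
  using valid_state_succ by (simp add: succs_def)

lemma trprob_rat_pos:
  "valid_state G \<sigma> \<Longrightarrow> kind G (fst \<sigma>) = Prob \<Longrightarrow> \<sigma>' \<in> succs G \<sigma> \<Longrightarrow> 0 < trprob_rat G \<sigma> \<sigma>'"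
  using wf unfolding wf_cfg_def by (cases \<sigma>) (auto simp: succs_conv_enabled trprob_rat_def)

lemma sum_trprob_rat:
  assumes "valid_state G \<sigma>" "kind G (fst \<sigma>) = Prob"
  shows "(\<Sum>\<sigma>'\<in>succs G \<sigma>. trprob_rat G \<sigma> \<sigma>') = 1"
proof -
  have "inj_on (\<lambda>l'. (l', next_val G \<sigma> l')) A" for A by (auto simp: inj_on_def)
  then have "(\<Sum>\<sigma>'\<in>succs G \<sigma>. trprob_rat G \<sigma> \<sigma>') =
      (\<Sum>l'\<in>enabled G (fst \<sigma>) (snd \<sigma>). aeval (cprob G (fst \<sigma>, l')) (snd \<sigma>))"
    using assms(1) by (simp add: succs_conv_enabled sum.reindex trprob_rat_def)
  also have "\<dots> = 1" using wf assms unfolding wf_cfg_def by (cases \<sigma>) auto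
  finally show ?thesis .
qed

lemma succs_Assign_singleton:
  assumes "valid_state G \<sigma>" "kind G (fst \<sigma>) = Assign" "\<tau> \<in> succs G \<sigma>"
  shows "succs G \<sigma> = {\<tau>}"
proof -
  have "l1 = l2" if "l1 \<in> enabled G (fst \<sigma>) (snd \<sigma>)" "l2 \<in> enabled G (fst \<sigma>) (snd \<sigma>)" for l1 l2
    using that assms(2) wf unfolding wf_cfg_def enabled_def by blast
  then show ?thesis using assms(1,3) by (auto simp: succs_conv_enabled)
qed

lemma min_reach_in_unit: "valid_state G \<sigma> \<Longrightarrow> 0 \<le> min_reach G k \<sigma> \<and> min_reach G k \<sigma> \<le> 1"
proof (induction k arbitrary: \<sigma>)
  case (Suc k)
  consider "\<sigma> = sbot G" | "\<sigma> \<noteq> sbot G" "kind G (fst \<sigma>) = Prob" | "\<sigma> \<noteq> sbot G" "kind G (fst \<sigma>) \<noteq> Prob"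
    by blast
  then show ?case
  proof cases
    case 2
    have p: "0 \<le> trprob_rat G \<sigma> \<sigma>'" if "\<sigma>' \<in> succs G \<sigma>" for \<sigma>'
      using trprob_rat_pos[OF Suc.prems 2(2) that] by simp
    have v: "0 \<le> min_reach G k \<sigma>' \<and> min_reach G k \<sigma>' \<le> 1" if "\<sigma>' \<in> succs G \<sigma>" for \<sigma>'
      using Suc.IH[OF valid_state_if_in_succs[OF that]] .
    have "(\<Sum>\<sigma>'\<in>succs G \<sigma>. trprob_rat G \<sigma> \<sigma>' * min_reach G k \<sigma>') \<le> (\<Sum>\<sigma>'\<in>succs G \<sigma>. trprob_rat G \<sigma> \<sigma>')"
      using p v by (intro sum_mono) (simp add: mult_left_le)
    then show ?thesis
      using 2 p v sum_trprob_rat[OF Suc.prems 2(2)] by (simp add: min_reach_Suc_Prob sum_nonneg)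
  next
    case 3
    have "Min (min_reach G k ` succs G \<sigma>) \<in> min_reach G k ` succs G \<sigma>"
      using finite_succs succs_nonempty[OF Suc.prems] by (intro Min_in) auto
    then obtain \<tau> where "\<tau> \<in> succs G \<sigma>" "Min (min_reach G k ` succs G \<sigma>) = min_reach G k \<tau>"
      by auto
    then show ?thesis using 3 Suc.IH[OF valid_state_if_in_succs] by (simp add: min_reach_Suc_not_Prob)
  qed simp
qed simp

lemma min_reach_Suc_mono: "valid_state G \<sigma> \<Longrightarrow> min_reach G k \<sigma> \<le> min_reach G (Suc k) \<sigma>"
proof (induction k arbitrary: \<sigma>)
  case 0
  then show ?case using min_reach_in_unit[OF 0, of 1] by simp
next
  case (Suc k)
  consider "\<sigma> = sbot G" | "\<sigma> \<noteq> sbot G" "kind G (fst \<sigma>) = Prob" | "\<sigma> \<noteq> sbot G" "kind G (fst \<sigma>) \<noteq> Prob"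
    by blast
  then show ?case
  proof cases
    case 2
    have "(\<Sum>\<sigma>'\<in>succs G \<sigma>. trprob_rat G \<sigma> \<sigma>' * min_reach G k \<sigma>')
        \<le> (\<Sum>\<sigma>'\<in>succs G \<sigma>. trprob_rat G \<sigma> \<sigma>' * min_reach G (Suc k) \<sigma>')"
      using Suc.IH[OF valid_state_if_in_succs] trprob_rat_pos[OF Suc.prems 2(2)]
      by (intro sum_mono mult_left_mono) (auto intro: less_imp_le)
    then show ?thesis using 2 by (simp add: min_reach_Suc_Prob)
  next
    case 3
    have "Min (min_reach G k ` succs G \<sigma>) \<le> Min (min_reach G (Suc k) ` succs G \<sigma>)"
      using Suc.IH[OF valid_state_if_in_succs] finite_succs succs_nonempty[OF Suc.prems]
      by (intro Min_image_mono) auto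
    then show ?thesis using 3 by (simp add: min_reach_Suc_not_Prob)
  qed simp
qed

lemma min_reach_Suc_le_succ:
  assumes "\<sigma> \<noteq> sbot G" "kind G (fst \<sigma>) \<noteq> Prob" "\<sigma>' \<in> succs G \<sigma>"
  shows "min_reach G (Suc k) \<sigma> \<le> min_reach G k \<sigma>'"
  using assms finite_succs by (simp add: min_reach_Suc_not_Prob)

end

section \<open>A scheduler attaining the limit of value iteration\<close>

definition min_reach_lim :: "cfg \<Rightarrow> state \<Rightarrow> real" where
  "min_reach_lim G \<sigma> = (SUP k. real_of_rat (min_reach G k \<sigma>))"

lemma min_reach_lim_sbot [simp]: "min_reach_lim G (sbot G) = 1"
  by (simp add: min_reach_lim_def)

context
  fixes G :: cfg
  assumes wf: "wf_cfg G"
begin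

lemma LIMSEQ_min_reach:
  assumes "valid_state G \<sigma>"
  shows "(\<lambda>k. real_of_rat (min_reach G k \<sigma>)) \<longlonglongrightarrow> min_reach_lim G \<sigma>"
  unfolding min_reach_lim_def
proof (rule LIMSEQ_incseq_SUP)
  show "bdd_above (range (\<lambda>k. real_of_rat (min_reach G k \<sigma>)))"
    using min_reach_in_unit[OF wf assms]
    by (intro bdd_aboveI[of _ 1]) (auto simp: of_rat_less_eq[where 'a=real, of _ 1, simplified])
  show "incseq (\<lambda>k. real_of_rat (min_reach G k \<sigma>))"
    using min_reach_Suc_mono[OF wf assms] by (intro incseq_SucI) (simp add: of_rat_less_eq)
qed

lemma min_reach_lim_in_unit:
  assumes "valid_state G \<sigma>"
  shows "0 \<le> min_reach_lim G \<sigma> \<and> min_reach_lim G \<sigma> \<le> 1"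
proof -
  have "0 \<le> real_of_rat (min_reach G k \<sigma>) \<and> real_of_rat (min_reach G k \<sigma>) \<le> 1" for k
    using min_reach_in_unit[OF wf assms, of k]
    by (simp add: of_rat_less_eq[where 'a=real, of _ 1, simplified] zero_le_of_rat_iff)
  then show ?thesis
    using LIMSEQ_le_const[OF LIMSEQ_min_reach[OF assms]] LIMSEQ_le_const2[OF LIMSEQ_min_reach[OF assms]]
    by auto
qed

lemma min_reach_lim_Prob:
  assumes "valid_state G \<sigma>" "\<sigma> \<noteq> sbot G" "kind G (fst \<sigma>) = Prob"
  shows "min_reach_lim G \<sigma> = (\<Sum>\<sigma>'\<in>succs G \<sigma>. trprob G \<sigma> \<sigma>' * min_reach_lim G \<sigma>')"
proof (rule LIMSEQ_unique)
  show "(\<lambda>k. real_of_rat (min_reach G (Suc k) \<sigma>)) \<longlonglongrightarrow> min_reach_lim G \<sigma>"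
    using LIMSEQ_Suc[OF LIMSEQ_min_reach[OF assms(1)]] .
  show "(\<lambda>k. real_of_rat (min_reach G (Suc k) \<sigma>)) \<longlonglongrightarrow> (\<Sum>\<sigma>'\<in>succs G \<sigma>. trprob G \<sigma> \<sigma>' * min_reach_lim G \<sigma>')"
    using assms(2,3)
    by (simp add: min_reach_Suc_Prob of_rat_sum of_rat_mult trprob_eq_of_rat)
       (intro tendsto_sum tendsto_mult tendsto_const LIMSEQ_min_reach valid_state_if_in_succs[OF wf])
qed

lemma min_reach_lim_not_Prob:
  assumes "valid_state G \<sigma>" "\<sigma> \<noteq> sbot G" "kind G (fst \<sigma>) \<noteq> Prob"
  shows "min_reach_lim G \<sigma> = Min (min_reach_lim G ` succs G \<sigma>)"
proof (rule LIMSEQ_unique)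
  show "(\<lambda>k. real_of_rat (min_reach G (Suc k) \<sigma>)) \<longlonglongrightarrow> min_reach_lim G \<sigma>"
    using LIMSEQ_Suc[OF LIMSEQ_min_reach[OF assms(1)]] .
  have "mono (real_of_rat :: rat \<Rightarrow> real)" by (rule monoI) (simp add: of_rat_less_eq)
  then have "real_of_rat (min_reach G (Suc k) \<sigma>) = Min ((\<lambda>\<sigma>'. real_of_rat (min_reach G k \<sigma>')) ` succs G \<sigma>)" for k
    using assms(2,3) finite_succs[OF wf] succs_nonempty[OF wf assms(1)]
    by (simp add: min_reach_Suc_not_Prob mono_Min_commute image_image)
  then show "(\<lambda>k. real_of_rat (min_reach G (Suc k) \<sigma>)) \<longlonglongrightarrow> Min (min_reach_lim G ` succs G \<sigma>)"
    using finite_succs[OF wf] succs_nonempty[OF wf assms(1)]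
    by (simp only:) (intro tendsto_Min_finite LIMSEQ_min_reach valid_state_if_in_succs[OF wf])
qed

definition greedy_sched :: "state list \<Rightarrow> state" where
  "greedy_sched \<pi> = (SOME \<sigma>'. \<sigma>' \<in> succs G (last \<pi>)
     \<and> min_reach_lim G \<sigma>' = Min (min_reach_lim G ` succs G (last \<pi>)))"

lemma greedy_sched_minimal:
  assumes "valid_state G (last \<pi>)"
  shows "greedy_sched \<pi> \<in> succs G (last \<pi>)
    \<and> min_reach_lim G (greedy_sched \<pi>) = Min (min_reach_lim G ` succs G (last \<pi>))"
proof -
  have "Min (min_reach_lim G ` succs G (last \<pi>)) \<in> min_reach_lim G ` succs G (last \<pi>)"
    using finite_succs[OF wf] succs_nonempty[OF wf assms] by (intro Min_in) auto
  then have "\<exists>\<sigma>'. \<sigma>' \<in> succs G (last \<pi>)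
      \<and> min_reach_lim G \<sigma>' = Min (min_reach_lim G ` succs G (last \<pi>))"
    by (metis (no_types, lifting) imageE)
  then show ?thesis unfolding greedy_sched_def by (rule someI_ex)
qed

lemma is_sched_greedy_sched: "is_sched G greedy_sched"
  unfolding is_sched_def using greedy_sched_minimal by (simp add: succs_def)

lemma reachp_greedy_sched_le:
  "\<pi> \<noteq> [] \<Longrightarrow> valid_state G (last \<pi>) \<Longrightarrow>
    reachp G greedy_sched M \<pi> \<le> (if sbot G \<in> set \<pi> then 1 else min_reach_lim G (last \<pi>))"
proof (induction M arbitrary: \<pi>)
  case 0
  then show ?case using min_reach_lim_in_unit[OF 0(2)] by simp
next
  case (Suc M)
  show ?case
  proof (cases "sbot G \<in> set \<pi>")
    case False
    let ?\<sigma> = "last \<pi>"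
    have nb: "?\<sigma> \<noteq> sbot G" using False Suc.prems(1) last_in_set by metis
    have step: "reachp G greedy_sched M (\<pi> @ [\<sigma>']) \<le> min_reach_lim G \<sigma>'" if "\<sigma>' \<in> succs G ?\<sigma>" for \<sigma>'
      using Suc.IH[of "\<pi> @ [\<sigma>']"] False valid_state_if_in_succs[OF wf that]
      by (cases "\<sigma>' = sbot G") auto
    show ?thesis
    proof (cases "kind G (fst ?\<sigma>) = Prob")
      case True
      have "reachp G greedy_sched (Suc M) \<pi>
          = (\<Sum>\<sigma>'\<in>succs G ?\<sigma>. trprob G ?\<sigma> \<sigma>' * reachp G greedy_sched M (\<pi> @ [\<sigma>']))"
        using False True by simp
      also have "\<dots> \<le> (\<Sum>\<sigma>'\<in>succs G ?\<sigma>. trprob G ?\<sigma> \<sigma>' * min_reach_lim G \<sigma>')"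
        using step trprob_rat_pos[OF wf Suc.prems(2) True]
        by (intro sum_mono mult_left_mono) (auto simp: trprob_eq_of_rat zero_le_of_rat_iff less_imp_le)
      also have "\<dots> = min_reach_lim G ?\<sigma>"
        using min_reach_lim_Prob[OF Suc.prems(2) nb True] by simp
      finally show ?thesis using False by simp
    next
      case not_Prob: False
      obtain \<tau> where \<tau>: "\<tau> \<in> succs G ?\<sigma>" "reachp G greedy_sched (Suc M) \<pi> = reachp G greedy_sched M (\<pi> @ [\<tau>])"
        "min_reach_lim G \<tau> = Min (min_reach_lim G ` succs G ?\<sigma>)"
      proof (cases "kind G (fst ?\<sigma>)")
        case NonDet
        then show ?thesis
          using greedy_sched_minimal[OF Suc.prems(2)] False by (intro that[of "greedy_sched \<pi>"]) auto
      next
        case Assign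
        define \<tau> where "\<tau> = (SOME \<sigma>'. succ G ?\<sigma> \<sigma>')"
        have "\<tau> \<in> succs G ?\<sigma>"
          using succs_nonempty[OF wf Suc.prems(2)] unfolding \<tau>_def succs_def by (auto intro: someI)
        moreover have "succs G ?\<sigma> = {\<tau>}"
          using succs_Assign_singleton[OF wf Suc.prems(2) Assign calculation] .
        ultimately show ?thesis using Assign False by (intro that[of \<tau>]) (simp_all add: \<tau>_def)
      qed (use not_Prob in simp)
      have "reachp G greedy_sched M (\<pi> @ [\<tau>]) \<le> min_reach_lim G ?\<sigma>"
        using step[OF \<tau>(1)] \<tau>(3) min_reach_lim_not_Prob[OF Suc.prems(2) nb not_Prob] by simp
      then show ?thesis using \<tau>(2) False by simp
    qed
  qed simp
qed

lemma reachp_in_unit: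
  "is_sched G s \<Longrightarrow> \<pi> \<noteq> [] \<Longrightarrow> valid_state G (last \<pi>) \<Longrightarrow> 0 \<le> reachp G s M \<pi> \<and> reachp G s M \<pi> \<le> 1"
proof (induction M arbitrary: \<pi>)
  case (Suc M)
  let ?\<sigma> = "last \<pi>"
  have IH: "0 \<le> reachp G s M (\<pi> @ [\<sigma>']) \<and> reachp G s M (\<pi> @ [\<sigma>']) \<le> 1" if "\<sigma>' \<in> succs G ?\<sigma>" for \<sigma>'
    using Suc.IH[of "\<pi> @ [\<sigma>']"] Suc.prems(1) valid_state_if_in_succs[OF wf that] by simp
  show ?case
  proof (cases "kind G (fst ?\<sigma>)")
    case NonDet
    then have "s \<pi> \<in> succs G ?\<sigma>" using Suc.prems unfolding is_sched_def succs_def by blast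
    then show ?thesis using IH NonDet by simp
  next
    case Assign
    have "(SOME \<sigma>'. succ G ?\<sigma> \<sigma>') \<in> succs G ?\<sigma>"
      using succs_nonempty[OF wf Suc.prems(3)] unfolding succs_def by (auto intro: someI)
    then show ?thesis using IH Assign by simp
  next
    case Prob
    have p: "0 \<le> trprob G ?\<sigma> \<sigma>'" if "\<sigma>' \<in> succs G ?\<sigma>" for \<sigma>'
      using trprob_rat_pos[OF wf Suc.prems(3) Prob that] by (simp add: trprob_eq_of_rat zero_le_of_rat_iff)
    have "(\<Sum>\<sigma>'\<in>succs G ?\<sigma>. trprob G ?\<sigma> \<sigma>' * reachp G s M (\<pi> @ [\<sigma>'])) \<le> (\<Sum>\<sigma>'\<in>succs G ?\<sigma>. trprob G ?\<sigma> \<sigma>')"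
      using p IH by (intro sum_mono) (simp add: mult_left_le)
    also have "\<dots> = 1"
      using sum_trprob_rat[OF wf Suc.prems(3) Prob] by (simp add: trprob_eq_of_rat flip: of_rat_sum)
    finally show ?thesis using Prob p IH by (simp add: sum_nonneg)
  qed
qed simp

lemma Pr_term_le_min_reach_lim: "Pr_term G \<le> min_reach_lim G (sinit G)"
proof -
  have init: "valid_state G (sinit G)" using wf by (simp add: wf_cfg_def)
  have bounds: "0 \<le> reachp G s k [sinit G] \<and> reachp G s k [sinit G] \<le> 1" if "is_sched G s" for s k
    using reachp_in_unit[OF that, of "[sinit G]"] init by simp
  have "0 \<le> reach_prob G s" if "is_sched G s" for s
  proof -
    have "reachp G s 0 [sinit G] \<le> reach_prob G s" unfolding reach_prob_def
      by (rule cSUP_upper) (use bounds[OF that] in \<open>auto intro!: bdd_aboveI[of _ 1]\<close>)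
    then show ?thesis using bounds[OF that, of 0] by linarith
  qed
  then have "Pr_term G \<le> reach_prob G greedy_sched" unfolding Pr_term_def
    by (intro cINF_lower) (auto intro!: bdd_belowI[of _ 0] is_sched_greedy_sched)
  also have "\<dots> \<le> min_reach_lim G (sinit G)" unfolding reach_prob_def
  proof (rule cSUP_least)
    show "reachp G greedy_sched k [sinit G] \<le> min_reach_lim G (sinit G)" for k
      using reachp_greedy_sched_le[of "[sinit G]" k] init by (cases "sinit G = sbot G") auto
  qed simp
  finally show ?thesis .
qed

lemma min_reach_gt_of_lim_gt:
  assumes "valid_state G \<sigma>" "c < min_reach_lim G \<sigma>"
  obtains k where "c < real_of_rat (min_reach G (Suc k) \<sigma>)"
proof -
  have "\<forall>\<^sub>F k in sequentially. c < real_of_rat (min_reach G k \<sigma>)"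
    using order_tendstoD(1)[OF LIMSEQ_min_reach[OF assms(1)] assms(2)] .
  then obtain N where "\<And>k. N \<le> k \<Longrightarrow> c < real_of_rat (min_reach G k \<sigma>)"
    unfolding eventually_sequentially by blast
  then show ?thesis using that[of N] by simp
qed

end

section \<open>First-order definability of guard sets\<close>

fun nat_fterm :: "nat \<Rightarrow> nat \<Rightarrow> fterm" where
  "nat_fterm m 0 = FVar m"
| "nat_fterm m (Suc k) = FAdd (nat_fterm m k) (FVar (Suc m))"

(* Formulas have no constants: for a valuation v of length m, the variables m and m+1
   are reserved for 0 and 1, and the variables from m+2 on serve as scratch registers. *)
definition std_env :: "nat \<Rightarrow> rat list \<Rightarrow> (nat \<Rightarrow> rat) \<Rightarrow> bool" where
  "std_env m v e \<longleftrightarrow> length v = m \<and> (\<forall>i<m. e i = v ! i) \<and> e m = 0 \<and> e (Suc m) = 1"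

lemma std_env_upd: "std_env m v e \<Longrightarrow> m + 2 \<le> j \<Longrightarrow> std_env m v (e(j := q))"
  by (auto simp: std_env_def)

lemma teval_nat_fterm: "std_env m v e \<Longrightarrow> teval e (nat_fterm m k) = of_nat k"
  by (induction k) (auto simp: std_env_def)

definition rat_const_form :: "nat \<Rightarrow> nat \<Rightarrow> rat \<Rightarrow> fform" where
  "rat_const_form m y c = (case quotient_of c of (a, b) \<Rightarrow>
     FEq (FAdd (FMul (nat_fterm m (nat b)) (FVar y)) (nat_fterm m (nat (-a)))) (nat_fterm m (nat a)))"

lemma fholds_rat_const_form:
  assumes "std_env m v e"
  shows "fholds e (rat_const_form m y c) \<longleftrightarrow> e y = c"
proof -
  obtain a b where q: "quotient_of c = (a, b)" by (cases "quotient_of c") auto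
  have b: "b > 0" using quotient_of_denom_pos[OF q] .
  have c: "c = of_int a / of_int b" using quotient_of_div[OF q] .
  have "fholds e (rat_const_form m y c) \<longleftrightarrow>
      of_nat (nat b) * e y + of_nat (nat (-a)) = (of_nat (nat a) :: rat)"
    using assms by (simp add: rat_const_form_def q teval_nat_fterm)
  also have "\<dots> \<longleftrightarrow> of_int b * e y = (of_int a :: rat)"
    using b by (cases "a \<ge> 0") (auto simp: of_nat_nat)
  also have "\<dots> \<longleftrightarrow> e y = c" using b by (auto simp: c field_simps)
  finally show ?thesis .
qed

definition two_regs_form :: "nat \<Rightarrow> nat \<Rightarrow> fform \<Rightarrow> fform \<Rightarrow> (fterm \<Rightarrow> fterm \<Rightarrow> fform) \<Rightarrow> fform" where
  "two_regs_form i j \<phi> \<psi> R = FEx i (FEx j (FAnd \<phi> (FAnd \<psi> (R (FVar i) (FVar j)))))"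

lemma fholds_two_regs_form:
  assumes "std_env m v e" "m + 2 \<le> i" "m + 2 \<le> j" "i \<noteq> j"
    and "\<And>e'. std_env m v e' \<Longrightarrow> fholds e' \<phi> \<longleftrightarrow> e' i = A"
    and "\<And>e'. std_env m v e' \<Longrightarrow> fholds e' \<psi> \<longleftrightarrow> e' j = B"
  shows "fholds e (two_regs_form i j \<phi> \<psi> R) \<longleftrightarrow> fholds (e(i := A, j := B)) (R (FVar i) (FVar j))"
proof -
  have "std_env m v (e(i := q, j := q'))" for q q' using assms(1-3) by (simp add: std_env_upd)
  then have "fholds (e(i := q, j := q')) \<phi> \<longleftrightarrow> q = A" "fholds (e(i := q, j := q')) \<psi> \<longleftrightarrow> q' = B" for q q'
    using assms(4-6) by simp_all
  then show ?thesis by (auto simp: two_regs_form_def)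
qed

(* A variable index beyond the valuation is evaluated to the unspecified value v ! i,
   which for every v of length m is the constant [] ! (i - m). *)
lemma nth_beyond_length: "length v = m \<Longrightarrow> m \<le> i \<Longrightarrow> v ! i = [] ! (i - m)"
  using nth_append[of v "[]" i] by simp

(* Subformulas reuse the registers above r; this is harmless because the formula for
   a at register r constrains no register other than r. *)
fun aexp_form :: "nat \<Rightarrow> aexp \<Rightarrow> nat \<Rightarrow> fform" where
  "aexp_form m (AConst c) r = rat_const_form m r c"
| "aexp_form m (AVar i) r =
     (if i < m then FEq (FVar r) (FVar i) else rat_const_form m r ([] ! (i - m)))"
| "aexp_form m (AAdd a b) r = two_regs_form (r + 1) (r + 2) (aexp_form m a (r + 1)) (aexp_form m b (r + 2))
     (\<lambda>s t. FEq (FVar r) (FAdd s t))"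
| "aexp_form m (AMul a b) r = two_regs_form (r + 1) (r + 2) (aexp_form m a (r + 1)) (aexp_form m b (r + 2))
     (\<lambda>s t. FEq (FVar r) (FMul s t))"
| "aexp_form m (ANeg a) r = FEx (r + 1) (FAnd (aexp_form m a (r + 1))
     (FEq (FAdd (FVar r) (FVar (r + 1))) (FVar m)))"

lemma fholds_aexp_form:
  "std_env m v e \<Longrightarrow> m + 2 \<le> r \<Longrightarrow> fholds e (aexp_form m a r) \<longleftrightarrow> e r = aeval a v"
proof (induction a arbitrary: r e)
  case (AConst c)
  then show ?case by (simp add: fholds_rat_const_form)
next
  case (AVar i)
  have len: "length v = m" and "\<forall>i<m. e i = v ! i" using AVar.prems(1) by (simp_all add: std_env_def)
  then show ?case
    using fholds_rat_const_form[OF AVar.prems(1)] nth_beyond_length[OF len, of i] by auto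
next
  case (AAdd a b)
  have "fholds e (aexp_form m (AAdd a b) r) \<longleftrightarrow>
      fholds (e(r + 1 := aeval a v, r + 2 := aeval b v)) (FEq (FVar r) (FAdd (FVar (r + 1)) (FVar (r + 2))))"
    unfolding aexp_form.simps using AAdd by (intro fholds_two_regs_form[where m = m and v = v]) auto
  then show ?case by simp
next
  case (AMul a b)
  have "fholds e (aexp_form m (AMul a b) r) \<longleftrightarrow>
      fholds (e(r + 1 := aeval a v, r + 2 := aeval b v)) (FEq (FVar r) (FMul (FVar (r + 1)) (FVar (r + 2))))"
    unfolding aexp_form.simps using AMul by (intro fholds_two_regs_form[where m = m and v = v]) auto
  then show ?case by simp
next
  case (ANeg a)
  have env: "std_env m v (e(r + 1 := q))" for q using ANeg.prems by (simp add: std_env_upd)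
  have "fholds (e(r + 1 := q)) (aexp_form m a (r + 1)) \<longleftrightarrow> q = aeval a v" for q
  proof -
    have "m + 2 \<le> r + 1" using ANeg.prems(2) by simp
    from ANeg.IH[OF env this] show ?thesis unfolding fun_upd_same .
  qed
  moreover have "e m = 0" "m \<noteq> r + 1" using ANeg.prems by (auto simp: std_env_def)
  ultimately show ?case by (auto simp: eq_neg_iff_add_eq_0)
qed

fun bexp_form :: "nat \<Rightarrow> bexp \<Rightarrow> fform" where
  "bexp_form m BTrue = FEq (FVar m) (FVar m)"
| "bexp_form m (BLe a b) = two_regs_form (m + 2) (m + 3) (aexp_form m a (m + 2)) (aexp_form m b (m + 3))
     (\<lambda>s t. FNot (FLess t s))"
| "bexp_form m (BLt a b) = two_regs_form (m + 2) (m + 3) (aexp_form m a (m + 2)) (aexp_form m b (m + 3))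
     FLess"
| "bexp_form m (BNot b) = FNot (bexp_form m b)"
| "bexp_form m (BAnd b c) = FAnd (bexp_form m b) (bexp_form m c)"
| "bexp_form m (BOr b c) = FNot (FAnd (FNot (bexp_form m b)) (FNot (bexp_form m c)))"

lemma fholds_bexp_form: "std_env m v e \<Longrightarrow> fholds e (bexp_form m b) \<longleftrightarrow> beval b v"
proof (induction b)
  case (BLe a b)
  have "fholds e (bexp_form m (BLe a b)) \<longleftrightarrow>
      fholds (e(m + 2 := aeval a v, m + 3 := aeval b v)) (FNot (FLess (FVar (m + 3)) (FVar (m + 2))))"
    unfolding bexp_form.simps using BLe
    by (intro fholds_two_regs_form[where m = m and v = v]) (auto simp: fholds_aexp_form)
  then show ?case by (simp add: not_less)
next
  case (BLt a b)
  have "fholds e (bexp_form m (BLt a b)) \<longleftrightarrow>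
      fholds (e(m + 2 := aeval a v, m + 3 := aeval b v)) (FLess (FVar (m + 2)) (FVar (m + 3)))"
    unfolding bexp_form.simps using BLt
    by (intro fholds_two_regs_form[where m = m and v = v]) (auto simp: fholds_aexp_form)
  then show ?case by simp
qed auto

lemma definable_set_bexp: "definable_set m {v. length v = m \<and> beval b v}"
proof -
  define zero_one :: fform where "zero_one = FAnd (FEq (FAdd (FVar m) (FVar m)) (FVar m))
     (FAnd (FEq (FMul (FVar (Suc m)) (FVar (Suc m))) (FVar (Suc m))) (FNot (FEq (FVar (Suc m)) (FVar m))))"
  have zero_one: "fholds (e(m := z, Suc m := u)) zero_one \<longleftrightarrow> z = 0 \<and> u = 1" for e z u
  proof -
    have "z + z = z \<and> u * u = u \<and> u \<noteq> z \<longleftrightarrow> z = 0 \<and> (u :: rat) = 1"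
      by (auto simp: mult_eq_self_implies_10)
    then show ?thesis by (simp add: zero_one_def)
  qed
  show ?thesis unfolding definable_set_def
  proof (intro exI[of _ "FEx m (FEx (Suc m) (FAnd zero_one (bexp_form m b)))"] allI impI)
    fix v :: "rat list" and e assume v: "length v = m \<and> (\<forall>i<m. e i = v ! i)"
    then have env: "std_env m v (e(m := 0, Suc m := 1))" by (simp add: std_env_def)
    have "fholds e (FEx m (FEx (Suc m) (FAnd zero_one (bexp_form m b)))) \<longleftrightarrow>
        (\<exists>z u. fholds (e(m := z, Suc m := u)) zero_one \<and> fholds (e(m := z, Suc m := u)) (bexp_form m b))"
      by simp
    also have "\<dots> \<longleftrightarrow> fholds (e(m := 0, Suc m := 1)) (bexp_form m b)"
      by (simp only: zero_one) blast
    also have "\<dots> \<longleftrightarrow> v \<in> {v. length v = m \<and> beval b v}"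
      using fholds_bexp_form[OF env] v by simp
    finally show "fholds e (FEx m (FEx (Suc m) (FAnd zero_one (bexp_form m b)))) \<longleftrightarrow>
        v \<in> {v. length v = m \<and> beval b v}" .
  qed
qed

section \<open>Value iteration by conditional expressions\<close>

datatype cexp = Leaf aexp | Cond bexp cexp cexp

fun ceval :: "cexp \<Rightarrow> rat list \<Rightarrow> rat" where
  "ceval (Leaf a) w = aeval a w"
| "ceval (Cond b t1 t2) w = (if beval b w then ceval t1 w else ceval t2 w)"

fun cbind :: "(aexp \<Rightarrow> cexp) \<Rightarrow> cexp \<Rightarrow> cexp" where
  "cbind h (Leaf a) = h a"
| "cbind h (Cond b t1 t2) = Cond b (cbind h t1) (cbind h t2)"

fun cbind2 :: "(aexp \<Rightarrow> aexp \<Rightarrow> cexp) \<Rightarrow> cexp \<Rightarrow> cexp \<Rightarrow> cexp" where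
  "cbind2 h (Leaf a) t = cbind (h a) t"
| "cbind2 h (Cond b t1 t2) t = Cond b (cbind2 h t1 t) (cbind2 h t2 t)"

lemma ceval_cbind: "(\<And>a. ceval (h a) w = F (aeval a w)) \<Longrightarrow> ceval (cbind h t) w = F (ceval t w)"
  by (induction t) auto

lemma ceval_cbind2:
  "(\<And>a b. ceval (h a b) w = F (aeval a w) (aeval b w)) \<Longrightarrow>
    ceval (cbind2 h t1 t2) w = F (ceval t1 w) (ceval t2 w)"
  by (induction t1) (auto intro: ceval_cbind)

definition cadd :: "cexp \<Rightarrow> cexp \<Rightarrow> cexp" where
  "cadd = cbind2 (\<lambda>a b. Leaf (AAdd a b))"

definition cmul :: "cexp \<Rightarrow> cexp \<Rightarrow> cexp" where
  "cmul = cbind2 (\<lambda>a b. Leaf (AMul a b))"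

definition cmin :: "cexp \<Rightarrow> cexp \<Rightarrow> cexp" where
  "cmin = cbind2 (\<lambda>a b. Cond (BLe a b) (Leaf a) (Leaf b))"

lemma ceval_cadd [simp]: "ceval (cadd t1 t2) w = ceval t1 w + ceval t2 w"
  unfolding cadd_def by (rule ceval_cbind2) simp

lemma ceval_cmul [simp]: "ceval (cmul t1 t2) w = ceval t1 w * ceval t2 w"
  unfolding cmul_def by (rule ceval_cbind2) simp

lemma ceval_cmin [simp]: "ceval (cmin t1 t2) w = min (ceval t1 w) (ceval t2 w)"
  unfolding cmin_def by (rule ceval_cbind2) (simp add: min_def)

definition csum_list :: "cexp list \<Rightarrow> cexp" where
  "csum_list ts = foldr cadd ts (Leaf (AConst 0))"

definition cmin_list :: "rat \<Rightarrow> cexp list \<Rightarrow> cexp" where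
  "cmin_list c ts = foldr cmin ts (Leaf (AConst c))"

lemma ceval_csum_list: "ceval (csum_list ts) w = (\<Sum>t\<leftarrow>ts. ceval t w)"
  unfolding csum_list_def by (induction ts) auto

lemma ceval_cmin_list: "ceval (cmin_list c ts) w = Min (insert c ((\<lambda>t. ceval t w) ` set ts))"
  unfolding cmin_list_def
proof (induction ts)
  case (Cons t ts)
  have "Min (insert c ((\<lambda>t. ceval t w) ` set (t # ts)))
      = Min (insert (ceval t w) (insert c ((\<lambda>t. ceval t w) ` set ts)))"
    by (simp add: insert_commute)
  also have "\<dots> = min (ceval t w) (Min (insert c ((\<lambda>t. ceval t w) ` set ts)))"
    by (rule Min_insert) auto
  finally show ?case using Cons by simp
qed simp

fun cpred :: "(aexp \<Rightarrow> bexp) \<Rightarrow> cexp \<Rightarrow> bexp" where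
  "cpred f (Leaf a) = f a"
| "cpred f (Cond b t1 t2) = BOr (BAnd b (cpred f t1)) (BAnd (BNot b) (cpred f t2))"

lemma beval_cpred: "(\<And>a. beval (f a) w = P (aeval a w)) \<Longrightarrow> beval (cpred f t) w = P (ceval t w)"
  by (induction t) auto

fun asubst :: "nat \<Rightarrow> aexp \<Rightarrow> aexp \<Rightarrow> aexp" where
  "asubst i e (AConst c) = AConst c"
| "asubst i e (AVar j) = (if j = i then e else AVar j)"
| "asubst i e (AAdd a b) = AAdd (asubst i e a) (asubst i e b)"
| "asubst i e (AMul a b) = AMul (asubst i e a) (asubst i e b)"
| "asubst i e (ANeg a) = ANeg (asubst i e a)"

fun bsubst :: "nat \<Rightarrow> aexp \<Rightarrow> bexp \<Rightarrow> bexp" where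
  "bsubst i e BTrue = BTrue"
| "bsubst i e (BLe a b) = BLe (asubst i e a) (asubst i e b)"
| "bsubst i e (BLt a b) = BLt (asubst i e a) (asubst i e b)"
| "bsubst i e (BNot b) = BNot (bsubst i e b)"
| "bsubst i e (BAnd b c) = BAnd (bsubst i e b) (bsubst i e c)"
| "bsubst i e (BOr b c) = BOr (bsubst i e b) (bsubst i e c)"

fun csubst :: "nat \<Rightarrow> aexp \<Rightarrow> cexp \<Rightarrow> cexp" where
  "csubst i e (Leaf a) = Leaf (asubst i e a)"
| "csubst i e (Cond b t1 t2) = Cond (bsubst i e b) (csubst i e t1) (csubst i e t2)"

lemma aeval_asubst: "i < length w \<Longrightarrow> aeval (asubst i e a) w = aeval a (w[i := aeval e w])"
  by (induction a) auto

lemma beval_bsubst: "i < length w \<Longrightarrow> beval (bsubst i e b) w = beval b (w[i := aeval e w])"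
  by (induction b) (auto simp: aeval_asubst)

lemma ceval_csubst: "i < length w \<Longrightarrow> ceval (csubst i e t) w = ceval t (w[i := aeval e w])"
  by (induction t) (auto simp: aeval_asubst beval_bsubst)

(* Relocates a program expression to the encoding l # x @ r of a state, in which the
   valuation x starts at index 1. *)
fun ashift :: "nat \<Rightarrow> aexp \<Rightarrow> aexp" where
  "ashift m (AConst c) = AConst c"
| "ashift m (AVar i) = (if i < m then AVar (Suc i) else AConst ([] ! (i - m)))"
| "ashift m (AAdd a b) = AAdd (ashift m a) (ashift m b)"
| "ashift m (AMul a b) = AMul (ashift m a) (ashift m b)"
| "ashift m (ANeg a) = ANeg (ashift m a)"

fun bshift :: "nat \<Rightarrow> bexp \<Rightarrow> bexp" where
  "bshift m BTrue = BTrue"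
| "bshift m (BLe a b) = BLe (ashift m a) (ashift m b)"
| "bshift m (BLt a b) = BLt (ashift m a) (ashift m b)"
| "bshift m (BNot b) = BNot (bshift m b)"
| "bshift m (BAnd b c) = BAnd (bshift m b) (bshift m c)"
| "bshift m (BOr b c) = BOr (bshift m b) (bshift m c)"

lemma aeval_ashift: "length x = m \<Longrightarrow> aeval (ashift m a) (l # x @ r) = aeval a x"
proof (induction a)
  case (AVar i)
  then show ?case using nth_beyond_length[OF AVar, of i] by (auto simp: nth_append)
qed auto

lemma beval_bshift: "length x = m \<Longrightarrow> beval (bshift m b) (l # x @ r) = beval b x"
  by (induction b) (auto simp: aeval_ashift)

definition bor_list :: "('a \<Rightarrow> bexp) \<Rightarrow> 'a list \<Rightarrow> bexp" where
  "bor_list F xs = foldr (\<lambda>i b. BOr (F i) b) xs (BNot BTrue)"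

definition band_list :: "('a \<Rightarrow> bexp) \<Rightarrow> 'a list \<Rightarrow> bexp" where
  "band_list F xs = foldr (\<lambda>i b. BAnd (F i) b) xs BTrue"

definition beq :: "aexp \<Rightarrow> aexp \<Rightarrow> bexp" where
  "beq a b = BAnd (BLe a b) (BLe b a)"

lemma beval_bor_list [simp]: "beval (bor_list F xs) w \<longleftrightarrow> (\<exists>i\<in>set xs. beval (F i) w)"
  unfolding bor_list_def by (induction xs) auto

lemma beval_band_list [simp]: "beval (band_list F xs) w \<longleftrightarrow> (\<forall>i\<in>set xs. beval (F i) w)"
  unfolding band_list_def by (induction xs) auto

lemma beval_beq [simp]: "beval (beq a b) w \<longleftrightarrow> aeval a w = aeval b w"
  by (auto simp: beq_def)

definition is_sbot_bexp :: "cfg \<Rightarrow> nat \<Rightarrow> bexp" where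
  "is_sbot_bexp G l = (if l = lout G
     then band_list (\<lambda>i. beq (AVar (Suc i)) (AConst 0)) [0..<nvars G] else BNot BTrue)"

lemma beval_is_sbot_bexp:
  "length x = nvars G \<Longrightarrow> beval (is_sbot_bexp G l) (l0 # x @ r) \<longleftrightarrow> (l, x) = sbot G"
  by (auto simp: is_sbot_bexp_def sbot_def nth_append list_eq_iff_nth_eq)

definition targets :: "cfg \<Rightarrow> nat \<Rightarrow> nat list" where
  "targets G l = sorted_list_of_set {l'. (l, l') \<in> ctrans G}"

definition upd_cexp :: "cfg \<Rightarrow> nat \<Rightarrow> nat \<Rightarrow> cexp \<Rightarrow> cexp" where
  "upd_cexp G l l' t = (if kind G l = Assign
     then (case cupd G (l, l') of (j, e) \<Rightarrow> csubst (Suc j) (ashift (nvars G) e) t) else t)"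

definition prob_branch_cexp :: "cfg \<Rightarrow> nat \<Rightarrow> nat \<Rightarrow> cexp \<Rightarrow> cexp" where
  "prob_branch_cexp G l l' t = Cond (bshift (nvars G) (cguard G (l, l')))
     (cmul (Leaf (ashift (nvars G) (cprob G (l, l')))) t) (Leaf (AConst 0))"

(* The constant 2 exceeds every reachability probability, so disabled transitions do not
   affect the minimum. *)
definition min_branch_cexp :: "cfg \<Rightarrow> nat \<Rightarrow> nat \<Rightarrow> cexp \<Rightarrow> cexp" where
  "min_branch_cexp G l l' t = Cond (bshift (nvars G) (cguard G (l, l'))) (upd_cexp G l l' t) (Leaf (AConst 2))"

fun min_reach_cexp :: "cfg \<Rightarrow> nat \<Rightarrow> nat \<Rightarrow> cexp" where
  "min_reach_cexp G 0 l = Cond (is_sbot_bexp G l) (Leaf (AConst 1)) (Leaf (AConst 0))"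
| "min_reach_cexp G (Suc k) l = Cond (is_sbot_bexp G l) (Leaf (AConst 1))
     (if kind G l = Prob
      then csum_list (map (\<lambda>l'. prob_branch_cexp G l l' (min_reach_cexp G k l')) (targets G l))
      else cmin_list 2 (map (\<lambda>l'. min_branch_cexp G l l' (min_reach_cexp G k l')) (targets G l)))"

context
  fixes G :: cfg
  assumes wf: "wf_cfg G"
begin

lemma set_targets: "set (targets G l) = {l'. (l, l') \<in> ctrans G}"
  and distinct_targets: "distinct (targets G l)"
  using finite_transitions_from[OF wf] by (simp_all add: targets_def)

lemma valid_state_target: "(l, l') \<in> ctrans G \<Longrightarrow> length y = nvars G \<Longrightarrow> valid_state G (l', y)"
  using wf unfolding wf_cfg_def by (auto simp: valid_state_def)

lemma enabled_eq_filter: "enabled G l x = {l' \<in> {l'. (l, l') \<in> ctrans G}. beval (cguard G (l, l')) x}"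
  by (auto simp: enabled_def)

lemma ceval_upd_cexp:
  assumes "valid_state G (l, x)" "(l, l') \<in> ctrans G"
    and IH: "\<And>y. valid_state G (l', y) \<Longrightarrow> ceval t (l0 # y @ r) = f (l', y)"
  shows "ceval (upd_cexp G l l' t) (l0 # x @ r) = f (l', next_val G (l, x) l')"
proof (cases "kind G l = Assign")
  case True
  obtain j e where je: "cupd G (l, l') = (j, e)" by (cases "cupd G (l, l')") auto
  have len: "length x = nvars G" using assms(1) by (simp add: valid_state_def)
  have j: "j < nvars G" using wf assms(2) True je unfolding wf_cfg_def by fastforce
  have "(l0 # x @ r)[Suc j := aeval (ashift (nvars G) e) (l0 # x @ r)] = l0 # x[j := aeval e x] @ r"
    using j len by (simp add: aeval_ashift list_update_append)
  then show ?thesis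
    using True je j len IH valid_state_target[OF assms(2)]
    by (simp add: upd_cexp_def ceval_csubst next_val_def)
next
  case False
  have "valid_state G (l', x)"
    using assms(1) by (intro valid_state_target[OF assms(2)]) (simp add: valid_state_def)
  then show ?thesis using False IH by (simp add: upd_cexp_def next_val_def)
qed

lemma ceval_min_reach_cexp:
  "valid_state G (l, x) \<Longrightarrow> ceval (min_reach_cexp G k l) (l0 # x @ r) = min_reach G k (l, x)"
proof (induction k arbitrary: l x)
  case 0
  then show ?case by (simp add: valid_state_def beval_is_sbot_bexp)
next
  case (Suc k)
  have len: "length x = nvars G" using Suc.prems by (simp add: valid_state_def)
  let ?w = "l0 # x @ r"
  let ?T = "{l'. (l, l') \<in> ctrans G}"
  show ?case
  proof (cases "(l, x) = sbot G")
    case nb: False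
    then have nb': "\<not> beval (is_sbot_bexp G l) ?w" using beval_is_sbot_bexp[OF len] by simp
    show ?thesis
    proof (cases "kind G l = Prob")
      case True
      define h where "h l' = (if beval (cguard G (l, l')) x
          then trprob_rat G (l, x) (l', x) * min_reach G k (l', x) else 0)" for l'
      have branch: "ceval (prob_branch_cexp G l l' (min_reach_cexp G k l')) ?w = h l'"
        if "l' \<in> set (targets G l)" for l'
      proof -
        have "(l, l') \<in> ctrans G" using that by (simp add: set_targets)
        then show ?thesis
          using Suc.IH[OF valid_state_target] len
          by (simp add: prob_branch_cexp_def h_def beval_bshift aeval_ashift trprob_rat_def)
      qed
      have "ceval (min_reach_cexp G (Suc k) l) ?w
          = (\<Sum>l'\<leftarrow>targets G l. ceval (prob_branch_cexp G l l' (min_reach_cexp G k l')) ?w)"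
        using nb' True by (simp add: ceval_csum_list comp_def)
      also have "\<dots> = (\<Sum>l'\<leftarrow>targets G l. h l')"
        using branch by (metis (no_types, lifting) map_cong)
      also have "\<dots> = (\<Sum>l'\<in>?T. h l')"
        by (simp add: sum_list_distinct_conv_sum_set distinct_targets set_targets)
      also have "\<dots> = (\<Sum>l'\<in>enabled G l x. trprob_rat G (l, x) (l', x) * min_reach G k (l', x))"
        unfolding h_def enabled_eq_filter by (rule sum.inter_filter[symmetric, OF finite_transitions_from[OF wf]])
      also have "\<dots> = (\<Sum>\<sigma>'\<in>succs G (l, x). trprob_rat G (l, x) \<sigma>' * min_reach G k \<sigma>')"
        using Suc.prems True
        by (simp add: succs_conv_enabled[OF wf] sum.reindex inj_on_def next_val_def)
      finally show ?thesis using nb True by (simp add: min_reach_Suc_Prob)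
    next
      case False
      define g where "g l' = (if l' \<in> enabled G l x
          then min_reach G k (l', next_val G (l, x) l') else 2)" for l'
      have branch: "ceval (min_branch_cexp G l l' (min_reach_cexp G k l')) ?w = g l'"
        if "l' \<in> set (targets G l)" for l'
      proof -
        have "(l, l') \<in> ctrans G" using that by (simp add: set_targets)
        then show ?thesis
          using ceval_upd_cexp[OF Suc.prems _ Suc.IH] len
          by (simp add: min_branch_cexp_def g_def beval_bshift enabled_def)
      qed
      have "ceval (min_reach_cexp G (Suc k) l) ?w
          = Min (insert 2 ((\<lambda>l'. ceval (min_branch_cexp G l l' (min_reach_cexp G k l')) ?w) ` ?T))"
        using nb' False by (simp add: ceval_cmin_list image_image set_targets)
      also have "\<dots> = Min (insert 2 (g ` ?T))"
        using branch by (metis (no_types, lifting) image_cong set_targets)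
      also have "\<dots> = Min ((\<lambda>l'. min_reach G k (l', next_val G (l, x) l')) ` enabled G l x)"
        unfolding g_def
      proof (rule Min_insert_guarded)
        show "enabled G l x \<noteq> {}"
          using succs_nonempty[OF wf Suc.prems] Suc.prems by (simp add: succs_conv_enabled[OF wf])
        show "min_reach G k (l', next_val G (l, x) l') \<le> 2" if "l' \<in> enabled G l x" for l'
        proof -
          have "(l', next_val G (l, x) l') \<in> succs G (l, x)"
            using that Suc.prems by (simp add: succs_conv_enabled[OF wf])
          then have "min_reach G k (l', next_val G (l, x) l') \<le> 1"
            using min_reach_in_unit[OF wf valid_state_if_in_succs[OF wf]] by blast
          then show ?thesis by simp
        qed
      qed (auto simp: enabled_def finite_transitions_from[OF wf])
      also have "\<dots> = Min (min_reach G k ` succs G (l, x))"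
        using Suc.prems by (simp add: succs_conv_enabled[OF wf] image_image)
      finally show ?thesis using nb False by (simp add: min_reach_Suc_not_Prob)
    qed
  qed (simp add: beval_is_sbot_bexp[OF len])
qed

end

section \<open>Definable sets of states\<close>

definition loc_bexp :: "cfg \<Rightarrow> (nat \<Rightarrow> bexp) \<Rightarrow> bexp" where
  "loc_bexp G B = bor_list (\<lambda>l. BAnd (beq (AVar 0) (AConst (of_nat l))) (B l)) [0..<nlocs G]"

lemma definable_state_relation:
  fixes R :: "state \<Rightarrow> rat list \<Rightarrow> bool"
  assumes "\<And>l x r. valid_state G (l, x) \<Longrightarrow> length r = k \<Longrightarrow>
    beval (B l) (of_nat l # x @ r) \<longleftrightarrow> R (l, x) r"
  shows "definable_set (Suc (nvars G) + k) {enc \<sigma> @ r | \<sigma> r. valid_state G \<sigma> \<and> length r = k \<and> R \<sigma> r}"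
proof -
  have "{enc \<sigma> @ r | \<sigma> r. valid_state G \<sigma> \<and> length r = k \<and> R \<sigma> r}
      = {v. length v = Suc (nvars G) + k \<and> beval (loc_bexp G B) v}"
  proof (intro set_eqI iffI)
    fix v assume "v \<in> {enc \<sigma> @ r | \<sigma> r. valid_state G \<sigma> \<and> length r = k \<and> R \<sigma> r}"
    then obtain l x r where v: "v = of_nat l # x @ r" "valid_state G (l, x)" "length r = k" "R (l, x) r"
      by (auto simp: enc_def)
    then show "v \<in> {v. length v = Suc (nvars G) + k \<and> beval (loc_bexp G B) v}"
      using assms by (auto simp: loc_bexp_def valid_state_def)
  next
    fix v assume v: "v \<in> {v. length v = Suc (nvars G) + k \<and> beval (loc_bexp G B) v}"
    then obtain l0 y where y: "v = l0 # y" by (cases v) auto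
    define x r where "x = take (nvars G) y" and "r = drop (nvars G) y"
    have xr: "v = l0 # x @ r" "length x = nvars G" "length r = k"
      using v y by (simp_all add: x_def r_def)
    obtain l where l: "l < nlocs G" "l0 = of_nat l" "beval (B l) v"
      using v xr(1) by (auto simp: loc_bexp_def)
    have "valid_state G (l, x)" using l xr by (simp add: valid_state_def)
    moreover have "R (l, x) r" using assms[OF calculation xr(3)] l xr(1) by simp
    ultimately show "v \<in> {enc \<sigma> @ r | \<sigma> r. valid_state G \<sigma> \<and> length r = k \<and> R \<sigma> r}"
      using l xr by (auto simp: enc_def)
  qed
  then show ?thesis by (simp add: definable_set_bexp)
qed

lemma definable_states_valid: "definable_states G {\<sigma>. valid_state G \<sigma>}"
proof -
  have "enc ` {\<sigma>. valid_state G \<sigma>} = {enc \<sigma> @ r | \<sigma> r. valid_state G \<sigma> \<and> length r = 0 \<and> True}"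
    by auto
  then show ?thesis
    unfolding definable_states_def
    using definable_state_relation[of G 0 "\<lambda>_. BTrue" "\<lambda>_ _. True"] by simp
qed

lemma definable_realfun_valid:
  assumes "\<And>l x q. valid_state G (l, x) \<Longrightarrow>
    beval (B l) (of_nat l # x @ [q]) \<longleftrightarrow> real_of_rat q \<le> f (l, x)"
  shows "definable_realfun G {\<sigma>. valid_state G \<sigma>} f"
proof -
  have "{enc \<sigma> @ [q] | \<sigma> q. \<sigma> \<in> {\<sigma>. valid_state G \<sigma>} \<and> real_of_rat q \<le> f \<sigma>}
      = {enc \<sigma> @ r | \<sigma> r. valid_state G \<sigma> \<and> length r = 1 \<and> real_of_rat (hd r) \<le> f \<sigma>}"
    by (fastforce simp: length_Suc_conv)
  moreover have "definable_set (Suc (nvars G) + 1)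
      {enc \<sigma> @ r | \<sigma> r. valid_state G \<sigma> \<and> length r = 1 \<and> real_of_rat (hd r) \<le> f \<sigma>}"
    using assms by (intro definable_state_relation[where B = B]) (auto simp: length_Suc_conv)
  ultimately show ?thesis unfolding definable_realfun_def by simp
qed

lemma definable_natfun_valid:
  assumes "\<And>l x q. valid_state G (l, x) \<Longrightarrow>
    beval (B l) (of_nat l # x @ [q]) \<longleftrightarrow> q = of_nat (U (l, x))"
  shows "definable_natfun G {\<sigma>. valid_state G \<sigma>} U"
proof -
  have "{enc \<sigma> @ [of_nat (U \<sigma>)] | \<sigma>. \<sigma> \<in> {\<sigma>. valid_state G \<sigma>}}
      = {enc \<sigma> @ r | \<sigma> r. valid_state G \<sigma> \<and> length r = 1 \<and> hd r = of_nat (U \<sigma>)}"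
    by (fastforce simp: length_Suc_conv)
  moreover have "definable_set (Suc (nvars G) + 1)
      {enc \<sigma> @ r | \<sigma> r. valid_state G \<sigma> \<and> length r = 1 \<and> hd r = of_nat (U \<sigma>)}"
    using assms by (intro definable_state_relation[where B = B]) (auto simp: length_Suc_conv)
  ultimately show ?thesis unfolding definable_natfun_def by simp
qed

lemma definable_real_of_rat: "definable_real (real_of_rat c)"
proof -
  have "{[q] | q. real_of_rat q \<le> real_of_rat c} = {v. length v = 1 \<and> beval (BLe (AVar 0) (AConst c)) v}"
    by (auto simp: length_Suc_conv of_rat_less_eq)
  then show ?thesis unfolding definable_real_def by (simp only: definable_set_bexp)
qed

section \<open>The stochastic invariant indicator and the ranking function\<close>

definition stoch_indicator :: "cfg \<Rightarrow> rat \<Rightarrow> nat \<Rightarrow> state \<Rightarrow> real" where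
  "stoch_indicator G \<delta> M \<sigma> = real_of_rat ((1 - min_reach G M \<sigma>) / (1 - \<delta>))"

definition level :: "rat \<Rightarrow> nat \<Rightarrow> nat \<Rightarrow> rat" where
  "level \<delta> M j = \<delta> * of_nat j / of_nat M"

definition level_rank :: "cfg \<Rightarrow> rat \<Rightarrow> nat \<Rightarrow> state \<Rightarrow> nat" where
  "level_rank G \<delta> M \<sigma> = (if \<delta> < min_reach G M \<sigma> \<and> \<sigma> \<noteq> sbot G
     then LEAST j. level \<delta> M j < min_reach G j \<sigma> else 0)"

lemma level_Suc: "level \<delta> M (Suc j) = level \<delta> M j + \<delta> / of_nat M"
  by (simp add: level_def add_divide_distrib distrib_left)

lemma one_le_stoch_indicator_iff:
  "\<delta> < 1 \<Longrightarrow> 1 \<le> stoch_indicator G \<delta> M \<sigma> \<longleftrightarrow> min_reach G M \<sigma> \<le> \<delta>"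
  by (simp add: stoch_indicator_def le_divide_eq)

lemma stoch_indicator_le:
  assumes "0 < \<delta>" "\<delta> \<le> 1/4" "p \<le> 1" "1 - p - real_of_rat \<delta> < real_of_rat (min_reach G M \<sigma>)"
  shows "stoch_indicator G \<delta> M \<sigma> \<le> p + 4 * real_of_rat \<delta>"
proof -
  define d where "d = real_of_rat \<delta>"
  have "real_of_rat \<delta> \<le> real_of_rat (1/4)" using assms(2) by (simp only: of_rat_less_eq)
  then have d: "0 < d" "d \<le> 1/4" using assms(1) by (simp_all add: d_def of_rat_divide)
  have "p * d \<le> 1 * d" "d * d \<le> 1/4 * d" using assms(3) d by (simp_all add: mult_right_mono)
  moreover have "(p + 4 * d) * (1 - d) = p + 4 * d - p * d - 4 * (d * d)" by (simp add: algebra_simps)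
  ultimately have "1 - real_of_rat (min_reach G M \<sigma>) \<le> (p + 4 * d) * (1 - d)"
    using assms(4) d unfolding d_def by linarith
  moreover have "0 < 1 - d" using d by simp
  ultimately have "(1 - real_of_rat (min_reach G M \<sigma>)) / (1 - d) \<le> p + 4 * d"
    by (simp add: pos_divide_le_eq)
  then show ?thesis by (simp add: stoch_indicator_def of_rat_divide of_rat_diff d_def)
qed

lemma level_rank_le_if_above: "level \<delta> M j < min_reach G j \<sigma> \<Longrightarrow> level_rank G \<delta> M \<sigma> \<le> j"
  by (simp add: level_rank_def Least_le)

lemma level_rank_eq_0: "min_reach G M \<sigma> \<le> \<delta> \<or> \<sigma> = sbot G \<Longrightarrow> level_rank G \<delta> M \<sigma> = 0"
  by (auto simp: level_rank_def)

lemma level_rank_le: "0 < M \<Longrightarrow> level_rank G \<delta> M \<sigma> \<le> M"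
  by (cases "\<delta> < min_reach G M \<sigma>")
     (auto simp: level_rank_def level_def intro: Least_le)

lemma level_rank_eq_Suc:
  assumes "0 < M" "\<delta> < min_reach G M \<sigma>" "\<sigma> \<noteq> sbot G"
  obtains j where "level_rank G \<delta> M \<sigma> = Suc j" "level \<delta> M (Suc j) < min_reach G (Suc j) \<sigma>"
proof -
  define P where "P j \<longleftrightarrow> level \<delta> M j < min_reach G j \<sigma>" for j
  have "P M" using assms by (simp add: P_def level_def)
  then have "P (LEAST j. P j)" by (rule LeastI)
  moreover have "\<not> P 0" using assms(3) by (simp add: P_def level_def)
  ultimately obtain j where "(LEAST j. P j) = Suc j" by (metis not0_implies_Suc)
  then show ?thesis
    using that \<open>P (LEAST j. P j)\<close> assms(2,3) by (simp add: level_rank_def P_def)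
qed

(* In the encoding l # x @ [q] of a state with an extra value, q is variable Suc (nvars G). *)
definition le_stoch_indicator_bexp :: "cfg \<Rightarrow> rat \<Rightarrow> nat \<Rightarrow> nat \<Rightarrow> bexp" where
  "le_stoch_indicator_bexp G \<delta> M l = cpred
     (\<lambda>a. BLe (AAdd (AMul (AVar (Suc (nvars G))) (AConst (1 - \<delta>))) a) (AConst 1)) (min_reach_cexp G M l)"

definition above_level_bexp :: "cfg \<Rightarrow> rat \<Rightarrow> nat \<Rightarrow> nat \<Rightarrow> nat \<Rightarrow> bexp" where
  "above_level_bexp G \<delta> M j l = cpred (\<lambda>a. BLt (AConst (level \<delta> M j)) a) (min_reach_cexp G j l)"

definition level_rank_bexp :: "cfg \<Rightarrow> rat \<Rightarrow> nat \<Rightarrow> nat \<Rightarrow> bexp" where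
  "level_rank_bexp G \<delta> M l = (let u = AVar (Suc (nvars G)); A = (\<lambda>j. above_level_bexp G \<delta> M j l) in
     BOr (BAnd (BOr (BNot (A M)) (is_sbot_bexp G l)) (beq u (AConst 0)))
       (BAnd (BAnd (A M) (BNot (is_sbot_bexp G l)))
         (bor_list (\<lambda>k. BAnd (beq u (AConst (of_nat k))) (BAnd (A k) (band_list (\<lambda>j. BNot (A j)) [0..<k])))
           [0..<Suc M])))"

context
  fixes G :: cfg
  assumes wf: "wf_cfg G"
begin

lemma stoch_indicator_nonneg: "\<delta> < 1 \<Longrightarrow> valid_state G \<sigma> \<Longrightarrow> 0 \<le> stoch_indicator G \<delta> M \<sigma>"
  using min_reach_in_unit[OF wf] by (simp add: stoch_indicator_def zero_le_of_rat_iff)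

lemma supermartingale_stoch_indicator:
  assumes "\<delta> < 1"
  shows "is_supermartingale G {\<sigma>. valid_state G \<sigma>} (stoch_indicator G \<delta> (Suc k))"
  unfolding is_supermartingale_def
proof (rule ballI, rule impI, rule conjI)
  fix \<sigma> assume "\<sigma> \<in> {\<sigma>. valid_state G \<sigma>}" and nb: "\<sigma> \<noteq> sbot G"
  then have v: "valid_state G \<sigma>" by simp
  have mono: "min_reach G k \<sigma>' \<le> min_reach G (Suc k) \<sigma>'" if "\<sigma>' \<in> succs G \<sigma>" for \<sigma>'
    using min_reach_Suc_mono[OF wf valid_state_if_in_succs[OF wf that]] .
  show "kind G (fst \<sigma>) = Assign \<or> kind G (fst \<sigma>) = NonDet \<longrightarrow>
      (\<forall>\<sigma>'\<in>succs G \<sigma>. stoch_indicator G \<delta> (Suc k) \<sigma>' \<le> stoch_indicator G \<delta> (Suc k) \<sigma>)"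
  proof (intro impI ballI)
    fix \<sigma>' assume "kind G (fst \<sigma>) = Assign \<or> kind G (fst \<sigma>) = NonDet" and s: "\<sigma>' \<in> succs G \<sigma>"
    then have "min_reach G (Suc k) \<sigma> \<le> min_reach G (Suc k) \<sigma>'"
      using order_trans[OF min_reach_Suc_le_succ[OF wf nb _ s] mono[OF s]] by auto
    then show "stoch_indicator G \<delta> (Suc k) \<sigma>' \<le> stoch_indicator G \<delta> (Suc k) \<sigma>"
      using assms by (simp add: stoch_indicator_def of_rat_less_eq divide_right_mono)
  qed
  show "kind G (fst \<sigma>) = Prob \<longrightarrow>
      (\<Sum>\<sigma>'\<in>succs G \<sigma>. trprob G \<sigma> \<sigma>' * stoch_indicator G \<delta> (Suc k) \<sigma>') \<le> stoch_indicator G \<delta> (Suc k) \<sigma>"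
  proof
    assume k: "kind G (fst \<sigma>) = Prob"
    let ?p = "trprob_rat G \<sigma>"
    have p: "0 \<le> ?p \<sigma>'" if "\<sigma>' \<in> succs G \<sigma>" for \<sigma>'
      using trprob_rat_pos[OF wf v k that] by simp
    have "min_reach G (Suc k) \<sigma> \<le> (\<Sum>\<sigma>'\<in>succs G \<sigma>. ?p \<sigma>' * min_reach G (Suc k) \<sigma>')"
      using nb k p mono by (simp add: min_reach_Suc_Prob sum_mono mult_left_mono)
    have "(\<Sum>\<sigma>'\<in>succs G \<sigma>. ?p \<sigma>' * ((1 - min_reach G (Suc k) \<sigma>') / (1 - \<delta>)))
        = (\<Sum>\<sigma>'\<in>succs G \<sigma>. ?p \<sigma>' - ?p \<sigma>' * min_reach G (Suc k) \<sigma>') / (1 - \<delta>)"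
      by (simp add: sum_divide_distrib right_diff_distrib)
    also have "\<dots> = (1 - (\<Sum>\<sigma>'\<in>succs G \<sigma>. ?p \<sigma>' * min_reach G (Suc k) \<sigma>')) / (1 - \<delta>)"
      by (simp add: sum_subtractf sum_trprob_rat[OF wf v k])
    also have "\<dots> \<le> (1 - min_reach G (Suc k) \<sigma>) / (1 - \<delta>)"
      using \<open>min_reach G (Suc k) \<sigma> \<le> _\<close> assms by (simp add: divide_right_mono)
    finally show "(\<Sum>\<sigma>'\<in>succs G \<sigma>. trprob G \<sigma> \<sigma>' * stoch_indicator G \<delta> (Suc k) \<sigma>')
        \<le> stoch_indicator G \<delta> (Suc k) \<sigma>"
      by (simp add: stoch_indicator_def trprob_eq_of_rat of_rat_less_eq flip: of_rat_mult of_rat_sum)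
  qed
qed

lemma definable_realfun_stoch_indicator:
  assumes "\<delta> < 1"
  shows "definable_realfun G {\<sigma>. valid_state G \<sigma>} (stoch_indicator G \<delta> M)"
proof (rule definable_realfun_valid[where B = "le_stoch_indicator_bexp G \<delta> M"])
  fix l x q assume v: "valid_state G (l, x)"
  then have "length x = nvars G" by (simp add: valid_state_def)
  then have "beval (le_stoch_indicator_bexp G \<delta> M l) (of_nat l # x @ [q])
      \<longleftrightarrow> q * (1 - \<delta>) + min_reach G M (l, x) \<le> 1"
    unfolding le_stoch_indicator_bexp_def
    by (subst beval_cpred[where P = "\<lambda>y. q * (1 - \<delta>) + y \<le> 1"])
       (simp_all add: nth_append ceval_min_reach_cexp[OF wf v])
  also have "\<dots> \<longleftrightarrow> real_of_rat q \<le> stoch_indicator G \<delta> M (l, x)"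
    using assms by (simp add: stoch_indicator_def le_divide_eq algebra_simps of_rat_less_eq)
  finally show "beval (le_stoch_indicator_bexp G \<delta> M l) (of_nat l # x @ [q])
      \<longleftrightarrow> real_of_rat q \<le> stoch_indicator G \<delta> M (l, x)" .
qed

lemma beval_above_level_bexp:
  "valid_state G (l, x) \<Longrightarrow>
    beval (above_level_bexp G \<delta> M j l) (l0 # x @ r) \<longleftrightarrow> level \<delta> M j < min_reach G j (l, x)"
  unfolding above_level_bexp_def
  by (subst beval_cpred[where P = "\<lambda>y. level \<delta> M j < y"]) (simp_all add: ceval_min_reach_cexp[OF wf])

lemma definable_natfun_level_rank:
  assumes "0 < M"
  shows "definable_natfun G {\<sigma>. valid_state G \<sigma>} (level_rank G \<delta> M)"
proof (rule definable_natfun_valid[where B = "level_rank_bexp G \<delta> M"])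
  fix l x q assume v: "valid_state G (l, x)"
  then have len: "length x = nvars G" by (simp add: valid_state_def)
  define P where "P j \<longleftrightarrow> level \<delta> M j < min_reach G j (l, x)" for j
  have PM: "P M \<longleftrightarrow> \<delta> < min_reach G M (l, x)" using assms by (simp add: P_def level_def)
  have rank: "level_rank G \<delta> M (l, x) = (if P M \<and> (l, x) \<noteq> sbot G then LEAST j. P j else 0)"
    using PM by (simp add: level_rank_def P_def)
  have "beval (level_rank_bexp G \<delta> M l) (of_nat l # x @ [q]) \<longleftrightarrow>
      ((\<not> P M \<or> (l, x) = sbot G) \<and> q = 0)
      \<or> (P M \<and> (l, x) \<noteq> sbot G \<and> (\<exists>k\<in>{..<Suc M}. q = of_nat k \<and> P k \<and> (\<forall>j\<in>{..<k}. \<not> P j)))"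
    using len by (simp add: level_rank_bexp_def Let_def beval_above_level_bexp[OF v] P_def
        beval_is_sbot_bexp nth_append lessThan_atLeast0 del: upt_Suc)
  also have "\<dots> \<longleftrightarrow> q = of_nat (level_rank G \<delta> M (l, x))"
  proof (cases "P M \<and> (l, x) \<noteq> sbot G")
    case True
    then show ?thesis using eq_of_nat_Least_iff[of P M q] by (simp add: rank)
  qed (auto simp: rank)
  finally show "beval (level_rank_bexp G \<delta> M l) (of_nat l # x @ [q]) \<longleftrightarrow>
      q = of_nat (level_rank G \<delta> M (l, x))" .
qed

lemma level_rank_decreases_not_Prob:
  assumes "valid_state G \<sigma>" "\<sigma> \<noteq> sbot G" "\<delta> < min_reach G M \<sigma>" "kind G (fst \<sigma>) \<noteq> Prob"
    and "\<sigma>' \<in> succs G \<sigma>" "0 \<le> \<delta>" "0 < M"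
  shows "level_rank G \<delta> M \<sigma>' < level_rank G \<delta> M \<sigma>"
proof -
  obtain j where j: "level_rank G \<delta> M \<sigma> = Suc j" "level \<delta> M (Suc j) < min_reach G (Suc j) \<sigma>"
    using level_rank_eq_Suc[OF assms(7,3,2)] .
  have "level \<delta> M j \<le> level \<delta> M (Suc j)" using assms(6) by (simp add: level_Suc)
  also have "\<dots> < min_reach G (Suc j) \<sigma>" by (rule j(2))
  also have "\<dots> \<le> min_reach G j \<sigma>'" using min_reach_Suc_le_succ[OF wf assms(2,4,5)] .
  finally show ?thesis using level_rank_le_if_above j(1) by (metis less_Suc_eq_le)
qed

lemma level_rank_decreases_Prob:
  assumes "valid_state G \<sigma>" "\<sigma> \<noteq> sbot G" "\<delta> < min_reach G M \<sigma>" "kind G (fst \<sigma>) = Prob"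
    and "0 \<le> \<delta>" "0 < M"
  shows "real_of_rat (\<delta> / of_nat M)
    < (\<Sum>\<sigma>'\<in>{\<sigma>' \<in> succs G \<sigma>. level_rank G \<delta> M \<sigma>' < level_rank G \<delta> M \<sigma>}. trprob G \<sigma> \<sigma>')"
proof -
  obtain j where j: "level_rank G \<delta> M \<sigma> = Suc j" "level \<delta> M (Suc j) < min_reach G (Suc j) \<sigma>"
    using level_rank_eq_Suc[OF assms(6,3,2)] .
  let ?p = "trprob_rat G \<sigma>"
  let ?above = "{\<sigma>' \<in> succs G \<sigma>. level \<delta> M j < min_reach G j \<sigma>'}"
  have p: "0 \<le> ?p \<sigma>'" if "\<sigma>' \<in> succs G \<sigma>" for \<sigma>'
    using trprob_rat_pos[OF wf assms(1,4) that] by simp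
  have "min_reach G (Suc j) \<sigma> = (\<Sum>\<sigma>'\<in>succs G \<sigma>. ?p \<sigma>' * min_reach G j \<sigma>')"
    using assms(2,4) by (rule min_reach_Suc_Prob)
  also have "\<dots> \<le> (\<Sum>\<sigma>'\<in>?above. ?p \<sigma>') + level \<delta> M j"
    using finite_succs[OF wf] p sum_trprob_rat[OF wf assms(1,4)] assms(5)
      min_reach_in_unit[OF wf valid_state_if_in_succs[OF wf]]
    by (intro sum_mult_le_mass_above) (auto simp: level_def)
  finally have "\<delta> / of_nat M < (\<Sum>\<sigma>'\<in>?above. ?p \<sigma>')" using j(2) by (simp add: level_Suc)
  also have "\<dots> \<le> (\<Sum>\<sigma>'\<in>{\<sigma>' \<in> succs G \<sigma>. level_rank G \<delta> M \<sigma>' < level_rank G \<delta> M \<sigma>}. ?p \<sigma>')"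
    using finite_succs[OF wf] p level_rank_le_if_above j(1)
    by (intro sum_mono2) (auto simp: less_Suc_eq_le)
  finally show ?thesis by (simp add: trprob_eq_of_rat of_rat_less flip: of_rat_sum)
qed

end

theorem mainTheorem9:
  fixes G :: cfg and p :: real and n :: nat
  assumes "wf_cfg G" and "0 < p" and "p < 1" and "Pr_term G \<ge> 1 - p" and "n \<ge> 1"
  shows "\<exists>Inv SI (\<epsilon>::real) U (H::nat).
     is_inductive_inv G Inv \<and> sinit G \<in> Inv \<and> definable_states G Inv
   \<and> definable_realfun G Inv SI \<and> SI (sinit G) \<le> p + 1 / real n
   \<and> (\<forall>\<sigma> \<in> Inv. SI \<sigma> \<ge> 0) \<and> is_supermartingale G Inv SI
   \<and> \<epsilon> > 0 \<and> definable_real \<epsilon>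
   \<and> definable_natfun G Inv U \<and> (\<forall>\<sigma> \<in> Inv. U \<sigma> \<le> H)
   \<and> (\<forall>\<gamma> \<in> Inv. (SI \<gamma> \<ge> 1 \<or> \<gamma> = sbot G) \<longrightarrow> U \<gamma> = 0)
   \<and> (\<forall>\<sigma> \<in> Inv. \<not> (SI \<sigma> \<ge> 1 \<or> \<sigma> = sbot G) \<longrightarrow>
        ((kind G (fst \<sigma>) = Assign \<or> kind G (fst \<sigma>) = NonDet) \<longrightarrow> (\<forall>\<sigma>' \<in> succs G \<sigma>. U \<sigma>' < U \<sigma>))
      \<and> (kind G (fst \<sigma>) = Prob \<longrightarrow>
           (\<Sum>\<sigma>' \<in> {\<sigma>' \<in> succs G \<sigma>. U \<sigma>' < U \<sigma>}. trprob G \<sigma> \<sigma>') > \<epsilon>))"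
proof -
  note wf = assms(1)
  define \<delta> :: rat where "\<delta> = 1 / (4 * of_nat n)"
  have \<delta>: "0 < \<delta>" "\<delta> \<le> 1/4" "\<delta> < 1" "4 * real_of_rat \<delta> = 1 / real n"
    using assms(5) by (simp_all add: \<delta>_def of_rat_divide of_rat_mult field_simps)
  have init: "valid_state G (sinit G)" using wf by (simp add: wf_cfg_def)
  have "0 < real_of_rat \<delta>" using \<delta>(1) by simp
  then have "1 - p - real_of_rat \<delta> < min_reach_lim G (sinit G)"
    using assms(4) Pr_term_le_min_reach_lim[OF wf] by linarith
  then obtain k where k: "1 - p - real_of_rat \<delta> < real_of_rat (min_reach G (Suc k) (sinit G))"
    using min_reach_gt_of_lim_gt[OF wf init] by blast
  let ?SI = "stoch_indicator G \<delta> (Suc k)" and ?U = "level_rank G \<delta> (Suc k)"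
  show ?thesis
  proof (intro exI[of _ "{\<sigma>. valid_state G \<sigma>}"] exI[of _ ?SI] exI[of _ "real_of_rat (\<delta> / of_nat (Suc k))"]
      exI[of _ ?U] exI[of _ "Suc k"] conjI ballI impI)
    show "is_inductive_inv G {\<sigma>. valid_state G \<sigma>}"
      using valid_state_succ[OF wf] by (auto simp: is_inductive_inv_def)
    show "?SI (sinit G) \<le> p + 1 / real n"
      using stoch_indicator_le[OF \<delta>(1,2) _ k] assms(3) \<delta>(4) by simp
    show "real_of_rat (\<delta> / of_nat (Suc k)) < (\<Sum>\<sigma>'\<in>{\<sigma>' \<in> succs G \<sigma>. ?U \<sigma>' < ?U \<sigma>}. trprob G \<sigma> \<sigma>')"
      if "\<sigma> \<in> {\<sigma>. valid_state G \<sigma>}" "\<not> (1 \<le> ?SI \<sigma> \<or> \<sigma> = sbot G)" "kind G (fst \<sigma>) = Prob" for \<sigma>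
      using that \<delta> by (intro level_rank_decreases_Prob[OF wf]) (auto simp: one_le_stoch_indicator_iff)
  qed (use wf init \<delta> in \<open>auto simp: definable_states_valid
      definable_realfun_stoch_indicator stoch_indicator_nonneg supermartingale_stoch_indicator
      definable_real_of_rat definable_natfun_level_rank level_rank_le level_rank_eq_0
      one_le_stoch_indicator_iff level_rank_decreases_not_Prob\<close>)
qed

end
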